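(* For all integers $x, y \in \mathbb{N}$, every set of $x$ vertices of a $y$-dimensional hypercube-like graph induces at most $\frac{1}{2} x \log x$ edges.
   Context: For $y \in \mathbb{N}$, a graph $H$ is $y$-dimensional hypercube-like if there is a partition $V(H) = \bigcup_{S \subseteq [y]} V_S$ (parts may be empty) such that: (1) for every edge $uv \in E(H)$ there are $S, T \subseteq [y]$ with $|S \triangle T| = 1$, $u \in V_S$ and $v \in V_T$; (2) for all $S, T \subseteq [y]$ with $|S \triangle T| = 1$, the bipartite graph $H[V_S, V_T]$ of edges between $V_S$ and $V_T$ is a matching (not necessarily perfect or non-empty). Logarithms are in base 2. *)

theory Defs
  imports Complex_Main
begin

definition simple_graph :: "'a set \<Rightarrow> 'a set set \<Rightarrow> bool" where
  "simple_graph V E \<longleftrightarrow> (\<forall>e\<in>E. e \<subseteq> V \<and> card e = 2)"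

text \<open>The partition V = union of V_S (S subset of [y]) is encoded by the map part
  assigning to each vertex v the unique S with v in V_S; so V_S = {v in V. part v = S}.\<close>
definition hypercube_like_partition ::
  "nat \<Rightarrow> 'a set \<Rightarrow> 'a set set \<Rightarrow> ('a \<Rightarrow> nat set) \<Rightarrow> bool" where
  "hypercube_like_partition y V E part \<longleftrightarrow>
     (\<forall>v\<in>V. part v \<subseteq> {1..y}) \<and>
     (\<forall>u v. {u, v} \<in> E \<longrightarrow> card ((part u - part v) \<union> (part v - part u)) = 1) \<and>
     (\<forall>S T. S \<subseteq> {1..y} \<longrightarrow> T \<subseteq> {1..y} \<longrightarrow> card ((S - T) \<union> (T - S)) = 1 \<longrightarrow>
        (\<forall>u\<in>V. \<forall>v\<in>V. \<forall>w\<in>V.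
            part u = S \<and> part v = T \<and> part w = T \<and> {u, v} \<in> E \<and> {u, w} \<in> E
            \<longrightarrow> v = w))"

definition hypercube_like :: "nat \<Rightarrow> 'a set \<Rightarrow> 'a set set \<Rightarrow> bool" where
  "hypercube_like y V E \<longleftrightarrow> simple_graph V E \<and> (\<exists>part. hypercube_like_partition y V E part)"

definition induced_edges :: "'a set set \<Rightarrow> 'a set \<Rightarrow> nat" where
  "induced_edges E X = card {e \<in> E. e \<subseteq> X}"

end

theory Submission imports Defs begin

(* If X lies in a single part it spans no edge. Otherwise choose a coordinate i
   on which two vertices of X differ and split X into X0, X1 according to whether i belongs to the
   part index. An edge between X0 and X1 changes exactly coordinate i, so by the matching condition
   each vertex lies on at most one of them, and the cut has at most min |X0| |X1| edges. The
   induction closes by a log a + b log b + 2 min a b \<le> (a + b) log (a + b). *)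

lemma mult_log2_add_ge:
  fixes a b :: real
  assumes "0 < a" "a \<le> b"
  shows "a * log 2 a + b * log 2 b + 2 * a \<le> (a + b) * log 2 (a + b)"
proof -
  define h where "h = (\<lambda>t. (a + t) * log 2 (a + t) - t * log 2 t)"
  have "h a \<le> h b"
  proof (rule DERIV_nonneg_imp_nondecreasing[OF assms(2)])
    fix t assume t: "a \<le> t" "t \<le> b"
    with assms have "0 < t" by simp
    have "DERIV h t :> (log 2 (a + t) + 1 / ln 2) - (log 2 t + 1 / ln 2)"
      unfolding h_def using \<open>0 < t\<close> assms
      by (intro derivative_eq_intros refl | simp)+
    moreover have "log 2 t \<le> log 2 (a + t)" using \<open>0 < t\<close> assms by simp
    ultimately show "\<exists>d. DERIV h t :> d \<and> 0 \<le> d" by auto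
  qed
  moreover have "log 2 (a + a) = 1 + log 2 a"
    using assms by (simp add: log_mult flip: mult_2)
  ultimately show ?thesis unfolding h_def by (simp add: algebra_simps)
qed

lemma mult_log2_add_ge_min:
  fixes a b :: real
  assumes "0 < a" "0 < b"
  shows "a * log 2 a + b * log 2 b + 2 * min a b \<le> (a + b) * log 2 (a + b)"
  using mult_log2_add_ge[of a b] mult_log2_add_ge[of b a] assms
  by (cases "a \<le> b") (simp_all add: min_def add.commute)

lemma card_le_vertex_cover:
  assumes "finite A" "finite C"
    and "\<And>e. e \<in> C \<Longrightarrow> e \<inter> A \<noteq> {}"
    and "\<And>a. a \<in> A \<Longrightarrow> card {e \<in> C. a \<in> e} \<le> 1"
  shows "card C \<le> card A"
proof -
  have "C = (\<Union>a\<in>A. {e \<in> C. a \<in> e})" using assms(3) by blast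
  hence "card C = card (\<Union>a\<in>A. {e \<in> C. a \<in> e})" by simp
  also have "\<dots> \<le> (\<Sum>a\<in>A. card {e \<in> C. a \<in> e})" by (rule card_UN_le[OF assms(1)])
  also have "\<dots> \<le> (\<Sum>a\<in>A. 1)" by (rule sum_mono) (rule assms(4))
  finally show ?thesis by simp
qed

lemma eq_sym_diff_singleton:
  assumes "card (sym_diff A B) = 1" "i \<in> sym_diff A B"
  shows "B = sym_diff A {i}"
proof -
  obtain z where "sym_diff A B = {z}" using assms(1) card_1_singletonE by blast
  with assms(2) have "sym_diff A B = {i}" by auto
  thus ?thesis by blast
qed

definition cut_edges :: "'a set set \<Rightarrow> 'a set \<Rightarrow> 'a set \<Rightarrow> 'a set set" where
  "cut_edges E A B = {e \<in> E. e \<subseteq> A \<union> B \<and> e \<inter> A \<noteq> {} \<and> e \<inter> B \<noteq> {}}"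

lemma cut_edges_commute: "cut_edges E A B = cut_edges E B A"
  unfolding cut_edges_def by blast

lemma induced_edges_Un_le:
  assumes "finite A" "finite B"
  shows "induced_edges E (A \<union> B) \<le> induced_edges E A + induced_edges E B + card (cut_edges E A B)"
proof -
  have fin: "finite {e \<in> E. e \<subseteq> A \<union> B}"
    by (rule finite_subset[of _ "Pow (A \<union> B)"]) (use assms in auto)
  have "finite ({e \<in> E. e \<subseteq> A} \<union> {e \<in> E. e \<subseteq> B} \<union> cut_edges E A B)"
    by (rule rev_finite_subset[OF fin]) (auto simp: cut_edges_def)
  moreover have "{e \<in> E. e \<subseteq> A \<union> B} \<subseteq> {e \<in> E. e \<subseteq> A} \<union> {e \<in> E. e \<subseteq> B} \<union> cut_edges E A B"
    unfolding cut_edges_def by blast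
  ultimately have "card {e \<in> E. e \<subseteq> A \<union> B}
      \<le> card ({e \<in> E. e \<subseteq> A} \<union> {e \<in> E. e \<subseteq> B} \<union> cut_edges E A B)"
    by (rule card_mono)
  also have "\<dots> \<le> card {e \<in> E. e \<subseteq> A} + card {e \<in> E. e \<subseteq> B} + card (cut_edges E A B)"
    by (meson card_Un_le add_le_mono le_trans order_refl)
  finally show ?thesis unfolding induced_edges_def .
qed

locale hypercube_like_graph =
  fixes y :: nat and V :: "'a set" and E :: "'a set set" and part :: "'a \<Rightarrow> nat set"
  assumes simple: "simple_graph V E"
    and partition: "hypercube_like_partition y V E part"
begin

lemma part_subset: "v \<in> V \<Longrightarrow> part v \<subseteq> {1..y}"
  using partition[unfolded hypercube_like_partition_def, THEN conjunct1] by blast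

lemma card_sym_diff_part_edge: "{u, v} \<in> E \<Longrightarrow> card (sym_diff (part u) (part v)) = 1"
  using partition[unfolded hypercube_like_partition_def, THEN conjunct2, THEN conjunct1] by blast

lemma edgeE:
  assumes "e \<in> E"
  obtains u v where "e = {u, v}" "u \<noteq> v" "u \<in> V" "v \<in> V"
  using simple assms unfolding simple_graph_def card_2_iff by (metis insert_subset)

lemma neighbour_unique_in_part:
  assumes "u \<in> V" "v \<in> V" "w \<in> V" "{u, v} \<in> E" "{u, w} \<in> E" "part v = part w"
  shows "v = w"
  using partition[unfolded hypercube_like_partition_def, THEN conjunct2, THEN conjunct2,
      rule_format, OF part_subset[OF assms(1)] part_subset[OF assms(2)]
      card_sym_diff_part_edge[OF assms(4)] assms(1-3)] assms(4-6)
  by blast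

lemma neighbour_across_unique:
  assumes "p \<in> V" "q \<in> V" "q' \<in> V" "{p, q} \<in> E" "{p, q'} \<in> E"
    and "i \<in> part p \<longleftrightarrow> i \<notin> part q" "i \<in> part p \<longleftrightarrow> i \<notin> part q'"
  shows "q = q'"
proof (rule neighbour_unique_in_part[OF assms(1-5)])
  have "i \<in> sym_diff (part p) (part q)" "i \<in> sym_diff (part p) (part q')"
    using assms(6,7) by blast+
  with card_sym_diff_part_edge[OF assms(4)] card_sym_diff_part_edge[OF assms(5)]
  show "part q = part q'" using eq_sym_diff_singleton by metis
qed

lemma cut_edgeE:
  assumes "e \<in> cut_edges E A B" "p \<in> e" "p \<in> A" "A \<inter> B = {}"
  obtains q where "e = {p, q}" "q \<in> B"
proof -
  have "e \<in> E" "e \<inter> B \<noteq> {}" using assms(1) unfolding cut_edges_def by auto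
  then obtain u v b where "e = {u, v}" "b \<in> e" "b \<in> B" using edgeE by blast
  moreover have "b \<noteq> p" using assms(3,4) \<open>b \<in> B\<close> by blast
  ultimately have "e = {p, b}" using assms(2) by blast
  with \<open>b \<in> B\<close> show ?thesis using that by blast
qed

lemma card_cut_edges_le:
  assumes "finite A" "finite B" "A \<subseteq> V" "B \<subseteq> V"
    and separated: "\<And>a b. a \<in> A \<Longrightarrow> b \<in> B \<Longrightarrow> i \<in> part a \<longleftrightarrow> i \<notin> part b"
  shows "card (cut_edges E A B) \<le> card A"
proof (rule card_le_vertex_cover[OF assms(1)])
  have "cut_edges E A B \<subseteq> Pow (A \<union> B)" unfolding cut_edges_def by blast
  with assms(1,2) show fin: "finite (cut_edges E A B)" using finite_subset by blast
  show "e \<inter> A \<noteq> {}" if "e \<in> cut_edges E A B" for e using that unfolding cut_edges_def by blast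
  have disjoint: "A \<inter> B = {}" using separated by blast
  fix p assume "p \<in> A"
  have unique: "e = e'"
    if e: "e \<in> cut_edges E A B" "p \<in> e" and e': "e' \<in> cut_edges E A B" "p \<in> e'" for e e'
  proof -
    obtain q where q: "e = {p, q}" "q \<in> B" using cut_edgeE[OF e \<open>p \<in> A\<close> disjoint] .
    obtain q' where q': "e' = {p, q'}" "q' \<in> B" using cut_edgeE[OF e' \<open>p \<in> A\<close> disjoint] .
    have "q = q'"
    proof (rule neighbour_across_unique)
      show "{p, q} \<in> E" "{p, q'} \<in> E" using e(1) e'(1) q q' unfolding cut_edges_def by auto
      show "i \<in> part p \<longleftrightarrow> i \<notin> part q" "i \<in> part p \<longleftrightarrow> i \<notin> part q'"
        using separated[OF \<open>p \<in> A\<close> q(2)] separated[OF \<open>p \<in> A\<close> q'(2)] .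
    qed (use \<open>p \<in> A\<close> q(2) q'(2) assms(3,4) in auto)
    thus ?thesis using q q' by simp
  qed
  have fin_p: "finite {e \<in> cut_edges E A B. p \<in> e}" using fin by simp
  show "card {e \<in> cut_edges E A B. p \<in> e} \<le> 1"
    unfolding One_nat_def card_le_Suc0_iff_eq[OF fin_p] using unique by blast
qed

lemma induced_edges_eq_0_if_part_constant:
  assumes "\<And>u v. u \<in> X \<Longrightarrow> v \<in> X \<Longrightarrow> part u = part v"
  shows "induced_edges E X = 0"
proof -
  have "\<not> e \<subseteq> X" if e: "e \<in> E" for e
  proof
    assume "e \<subseteq> X"
    obtain u v where "e = {u, v}" using edgeE[OF e] by metis
    with \<open>e \<subseteq> X\<close> assms have "part u = part v" by simp
    hence "sym_diff (part u) (part v) = {}" by simp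
    with card_sym_diff_part_edge \<open>e = {u, v}\<close> e show False by fastforce
  qed
  hence "{e \<in> E. e \<subseteq> X} = {}" by blast
  thus ?thesis unfolding induced_edges_def by (simp only: card.empty)
qed

lemma induced_edges_le_half_card_log:
  assumes "finite X" "X \<subseteq> V"
  shows "real (induced_edges E X) \<le> 1/2 * card X * log 2 (card X)"
  using assms
proof (induction "card X" arbitrary: X rule: less_induct)
  case less
  show ?case
  proof (cases "\<forall>u\<in>X. \<forall>v\<in>X. part u = part v")
    case True
    hence "induced_edges E X = 0" by (metis induced_edges_eq_0_if_part_constant)
    moreover have "0 \<le> real (card X) * log 2 (card X)" by (cases "card X = 0") auto
    ultimately show ?thesis by simp
  next
    case False
    then obtain u v i where "u \<in> X" "v \<in> X" "i \<in> sym_diff (part u) (part v)" by blast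
    define X0 where "X0 = {w \<in> X. i \<notin> part w}"
    define X1 where "X1 = {w \<in> X. i \<in> part w}"
    have X_split: "X = X0 \<union> X1" "X0 \<inter> X1 = {}" by (auto simp: X0_def X1_def)
    have nonempty: "X0 \<noteq> {}" "X1 \<noteq> {}"
      using \<open>u \<in> X\<close> \<open>v \<in> X\<close> \<open>i \<in> sym_diff (part u) (part v)\<close> by (auto simp: X0_def X1_def)
    have fin: "finite X0" "finite X1" and sub: "X0 \<subseteq> V" "X1 \<subseteq> V"
      using less.prems by (auto simp: X0_def X1_def)
    have pos: "0 < real (card X0)" "0 < real (card X1)"
      using nonempty fin by auto
    have card_X: "card X = card X0 + card X1"
      using X_split fin card_Un_disjoint by metis
    have "card X0 < card X" "card X1 < card X"
      using card_X nonempty fin by auto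
    hence IH: "real (induced_edges E X0) \<le> 1/2 * card X0 * log 2 (card X0)"
      "real (induced_edges E X1) \<le> 1/2 * card X1 * log 2 (card X1)"
      using less.hyps fin sub by blast+
    have "card (cut_edges E X0 X1) \<le> card X0"
      by (rule card_cut_edges_le[OF fin sub, of i]) (auto simp: X0_def X1_def)
    moreover have "card (cut_edges E X1 X0) \<le> card X1"
      by (rule card_cut_edges_le[OF fin(2,1) sub(2,1), of i]) (auto simp: X0_def X1_def)
    ultimately have cut: "real (card (cut_edges E X0 X1)) \<le> min (real (card X0)) (real (card X1))"
      by (simp add: cut_edges_commute)
    have "real (induced_edges E X)
        \<le> real (induced_edges E X0) + real (induced_edges E X1) + real (card (cut_edges E X0 X1))"
      using induced_edges_Un_le[OF fin] X_split by (metis of_nat_add of_nat_le_iff)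
    also have "\<dots> \<le> 1/2 * card X0 * log 2 (card X0) + 1/2 * card X1 * log 2 (card X1)
        + min (real (card X0)) (real (card X1))"
      using IH cut by linarith
    also have "\<dots> \<le> 1/2 * (card X0 + card X1) * log 2 (card X0 + card X1)"
      using mult_log2_add_ge_min[OF pos] by (simp add: algebra_simps)
    finally show ?thesis by (simp add: card_X)
  qed
qed

end

theorem lemma5p1:
  fixes y x :: nat and V :: "'a set" and E :: "'a set set" and X :: "'a set"
  assumes "hypercube_like y V E"
    and "X \<subseteq> V" and "finite X" and "card X = x"
  shows "real (induced_edges E X) \<le> 1/2 * real x * log 2 (real x)"
proof -
  from assms(1) obtain part where "simple_graph V E" "hypercube_like_partition y V E part"
    unfolding hypercube_like_def by blast
  hence "hypercube_like_graph y V E part" by (rule hypercube_like_graph.intro)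
  from hypercube_like_graph.induced_edges_le_half_card_log[OF this assms(3,2)]
  show ?thesis unfolding assms(4) .
qed

end
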